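(* Let $c\in\mathbb{R}\setminus\{0\}$ and let $\mathbf f_c:\mathbb{R}^2\to\mathbb{R}^2$ be $$\mathbf f_c(u,v)=\bigl(-3u^2-cv,\ -3v^2-cu\bigr).$$ Let $\mathbf s=(s_1,s_2)$ be a point such that $\mathbf f_c(\mathbf x)=\mathbf s$ has exactly four distinct solutions $\mathbf x_i=(u_i,v_i)\in\mathbb{R}^2$, $i=1,\dots,4$, each with $\det(\mathrm{Jac}\,\mathbf f_c)(\mathbf x_i)\neq0$. Then, with $\mathfrak M_i=1/\det(\mathrm{Jac}\,\mathbf f_c)(\mathbf x_i)=\frac{1}{36u_iv_i-c^2}$, $$\mathfrak M_1+\mathfrak M_2+\mathfrak M_3+\mathfrak M_4=0.$$
   Context: $\mathbf f_c$ is the generic local form of a one-parameter family of maps between planes near a hyperbolic umbilic singularity; it is induced by the family of functions $F_{c,\mathbf s}(u,v)=s_1u+s_2v+cuv+u^3+v^3$. The points $\mathbf s$ with four preimages form the four-image region of $\mathbf f_c$. *)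

theory Defs
  imports "HOL-Analysis.Analysis"
begin

definition fc :: "real \<Rightarrow> real \<times> real \<Rightarrow> real \<times> real" where
  "fc c x = (-3 * (fst x)^2 - c * snd x, -3 * (snd x)^2 - c * fst x)"

text \<open>Determinant of the Jacobian matrix of fc at (u,v):
  det [[-6u, -c], [-c, -6v]] = 36 u v - c^2.\<close>
definition jac_det_fc :: "real \<Rightarrow> real \<times> real \<Rightarrow> real" where
  "jac_det_fc c x = (-6 * fst x) * (-6 * snd x) - (-c) * (-c)"

end

theory Submission
  imports Defs
begin

(*
  Write s = (s1, s2).  The first equation of fc c (u, v) = s
  gives c v = -(s1 + 3 u^2), so (as c \<noteq> 0) a point of the fibre is determined
  by its first coordinate u, and substituting v into the second equation shows that
  u is a root of the depressed quartic
      q(u) = 27 u^4 + 18 s1 u^2 + c^3 u + (3 s1^2 + c^2 s2).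
  The same substitution turns the Jacobian determinant into c det = -q'(u).
  If the fibre consists of four points, their first coordinates u1..u4 are the four
  distinct roots of q, hence q'(ui) = 27 \<Prod>(j\<noteq>i) (ui - uj), and the claim becomes
  the classical partial-fraction identity \<Sum>i 1/\<Prod>(j\<noteq>i)(ui - uj) = 0.
*)

text \<open>Proved by successive divided differences, which kill A, B, C in turn.\<close>
lemma depressed_quartic_deriv_at_root:
  fixes k A B C a b c d :: real
  assumes "k \<noteq> 0"
    and distinct: "a \<noteq> b" "a \<noteq> c" "a \<noteq> d" "b \<noteq> c" "b \<noteq> d" "c \<noteq> d"
    and roots: "\<And>x. x \<in> {a, b, c, d} \<Longrightarrow> k*x^4 + A*x^2 + B*x + C = 0"
  shows "4*k*a^3 + 2*A*a + B = k * ((a - b) * (a - c) * (a - d))"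
proof -
  let ?D1 = "\<lambda>y. k*(a^3 + a^2*y + a*y^2 + y^3) + A*(a + y) + B"
  let ?D2 = "\<lambda>y. k*(a^2 + b^2 + y^2 + a*b + a*y + b*y) + A"
  have qa: "k*a^4 + A*a^2 + B*a + C = 0" using roots by simp
  have D1: "?D1 y = 0" if "k*y^4 + A*y^2 + B*y + C = 0" "a \<noteq> y" for y
  proof -
    have "(a - y) * ?D1 y = 0" using qa that(1) by algebra
    with \<open>a \<noteq> y\<close> show ?thesis by simp
  qed
  have D1b: "?D1 b = 0" and D1c: "?D1 c = 0" and D1d: "?D1 d = 0"
    using D1 roots distinct by simp_all
  have D2: "?D2 y = 0" if "?D1 y = 0" "b \<noteq> y" for y
  proof -
    have "(b - y) * ?D2 y = 0" using D1b that(1) by algebra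
    with \<open>b \<noteq> y\<close> show ?thesis by simp
  qed
  have "(c - d) * (k * (a + b + c + d)) = 0"
    using D2[OF D1c distinct(4)] D2[OF D1d distinct(5)] by algebra
  with \<open>k \<noteq> 0\<close> distinct(6) have sum_roots: "a + b + c + d = 0" by simp
  show ?thesis
    using D1b D2[OF D1c distinct(4)] sum_roots by algebra
qed

lemma sum_reciprocal_vandermonde4:
  fixes a b c d :: real
  assumes "a \<noteq> b" "a \<noteq> c" "a \<noteq> d" "b \<noteq> c" "b \<noteq> d" "c \<noteq> d"
  shows "1/((a-b)*(a-c)*(a-d)) + 1/((b-a)*(b-c)*(b-d)) + 1/((c-a)*(c-b)*(c-d))
       + 1/((d-a)*(d-b)*(d-c)) = 0"
proof -
  have "a-b \<noteq> 0" "a-c \<noteq> 0" "a-d \<noteq> 0" "b-c \<noteq> 0" "b-d \<noteq> 0" "c-d \<noteq> 0"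
       "b-a \<noteq> 0" "c-a \<noteq> 0" "d-a \<noteq> 0" "c-b \<noteq> 0" "d-b \<noteq> 0" "d-c \<noteq> 0"
    using assms by auto
  then show ?thesis by (simp add: divide_simps) (simp add: algebra_simps)
qed

lemma fibre_snd:
  assumes "c \<noteq> 0" "fc c x = s"
  shows "snd x = -(fst s + 3 * (fst x)^2) / c"
  using assms unfolding fc_def by (auto simp: field_simps)

lemma fibre_fst_inj:
  assumes "c \<noteq> 0" "fc c x = s" "fc c y = s" "x \<noteq> y"
  shows "fst x \<noteq> fst y"
  using fibre_snd[OF assms(1,2)] fibre_snd[OF assms(1,3)] assms(4) by (metis prod_eq_iff)

lemma fibre_quartic:
  assumes "fc c x = s"
  shows "27*(fst x)^4 + (18 * fst s)*(fst x)^2 + c^3*(fst x)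
           + (3 * (fst s)^2 + c^2 * snd s) = 0"
proof -
  have v: "c * snd x = -(fst s + 3 * (fst x)^2)"
    and w: "snd s = -3 * (snd x)^2 - c * fst x"
    using assms unfolding fc_def by auto
  have "c^2 * snd s = -3 * (c * snd x)^2 - c^3 * fst x"
    unfolding w by (simp add: power2_eq_square power3_eq_cube algebra_simps)
  then show ?thesis unfolding v by algebra
qed

lemma fibre_jac_det:
  assumes "fc c x = s"
  shows "c * jac_det_fc c x = -(4*27*(fst x)^3 + 2*(18 * fst s)*(fst x) + c^3)"
proof -
  have "c * snd x = -(fst s + 3 * (fst x)^2)"
    using assms unfolding fc_def by auto
  then show ?thesis unfolding jac_det_fc_def by algebra
qed

lemma inverse_jac_det_on_fibre:
  assumes "c \<noteq> 0"
    and fibre: "fc c x = s" "fc c y = s" "fc c z = s" "fc c w = s"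
    and distinct: "x \<noteq> y" "x \<noteq> z" "x \<noteq> w" "y \<noteq> z" "y \<noteq> w" "z \<noteq> w"
  shows "1 / jac_det_fc c x
           = -c/27 * (1 / ((fst x - fst y) * (fst x - fst z) * (fst x - fst w)))"
proof -
  have roots: "27*u^4 + (18 * fst s)*u^2 + c^3*u + (3 * (fst s)^2 + c^2 * snd s) = 0"
    if "u \<in> {fst x, fst y, fst z, fst w}" for u
    using that by (elim insertE emptyE) (simp_all only: fibre_quartic fibre)
  have "fst x \<noteq> fst y" "fst x \<noteq> fst z" "fst x \<noteq> fst w"
       "fst y \<noteq> fst z" "fst y \<noteq> fst w" "fst z \<noteq> fst w"
    using fibre distinct fibre_fst_inj[OF \<open>c \<noteq> 0\<close>] by metis+
  from depressed_quartic_deriv_at_root[of 27, OF _ this roots]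
  have deriv: "4*27*(fst x)^3 + 2*(18 * fst s)*(fst x) + c^3
                 = 27 * ((fst x - fst y) * (fst x - fst z) * (fst x - fst w))"
    by simp
  have "c * jac_det_fc c x = -27 * ((fst x - fst y) * (fst x - fst z) * (fst x - fst w))"
    using fibre_jac_det[OF fibre(1)] deriv by simp
  with \<open>c \<noteq> 0\<close> have "jac_det_fc c x
      = -27 * ((fst x - fst y) * (fst x - fst z) * (fst x - fst w)) / c"
    by (metis nonzero_mult_div_cancel_left)
  then show ?thesis by simp
qed

lemma card_4_obtain:
  assumes "card S = 4"
  obtains x1 x2 x3 x4 where "S = {x1, x2, x3, x4}"
    and "x1 \<noteq> x2" "x1 \<noteq> x3" "x1 \<noteq> x4" "x2 \<noteq> x3" "x2 \<noteq> x4" "x3 \<noteq> x4"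
proof -
  from assms obtain x1 T where S: "S = insert x1 T" "x1 \<notin> T" "card T = 3"
    using card_eq_SucD[of S 3] by auto
  then obtain x2 x3 x4 where "T = {x2, x3, x4}" "x2 \<noteq> x3" "x3 \<noteq> x4" "x2 \<noteq> x4"
    by (auto simp: card_3_iff)
  with S that show ?thesis by auto
qed

theorem theorem1:
  fixes c :: real and s :: "real \<times> real"
  assumes "c \<noteq> 0"
    and "finite {x. fc c x = s}"
    and "card {x. fc c x = s} = 4"
    and "\<forall>x\<in>{x. fc c x = s}. jac_det_fc c x \<noteq> 0"
  shows "(\<Sum>x\<in>{x. fc c x = s}. 1 / jac_det_fc c x) = 0"
proof -
  obtain x1 x2 x3 x4 where fibre: "{x. fc c x = s} = {x1, x2, x3, x4}"
    and d: "x1 \<noteq> x2" "x1 \<noteq> x3" "x1 \<noteq> x4" "x2 \<noteq> x3" "x2 \<noteq> x4" "x3 \<noteq> x4"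
    using card_4_obtain[OF assms(3)] .
  then have pts: "fc c x1 = s" "fc c x2 = s" "fc c x3 = s" "fc c x4 = s" by auto
  have sum4: "(\<Sum>x\<in>{x. fc c x = s}. 1 / jac_det_fc c x)
      = 1 / jac_det_fc c x1 + 1 / jac_det_fc c x2 + 1 / jac_det_fc c x3 + 1 / jac_det_fc c x4"
    unfolding fibre using d by (simp add: add.assoc)
  note inv = inverse_jac_det_on_fibre[OF \<open>c \<noteq> 0\<close>]
  have "(\<Sum>x\<in>{x. fc c x = s}. 1 / jac_det_fc c x) = -c/27 * (
        1/((fst x1 - fst x2) * (fst x1 - fst x3) * (fst x1 - fst x4))
      + 1/((fst x2 - fst x1) * (fst x2 - fst x3) * (fst x2 - fst x4))
      + 1/((fst x3 - fst x1) * (fst x3 - fst x2) * (fst x3 - fst x4))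
      + 1/((fst x4 - fst x1) * (fst x4 - fst x2) * (fst x4 - fst x3)))"
    unfolding sum4 distrib_left
      inv[OF pts(1,2,3,4) d(1,2,3,4,5,6)]
      inv[OF pts(2,1,3,4) d(1)[symmetric] d(4,5,2,3,6)]
      inv[OF pts(3,1,2,4) d(2)[symmetric] d(4)[symmetric] d(6,1,3,5)]
      inv[OF pts(4,1,2,3) d(3)[symmetric] d(5)[symmetric] d(6)[symmetric] d(1,2,4)] ..
  also have "\<dots> = 0"
  proof -
    have "fst x1 \<noteq> fst x2" "fst x1 \<noteq> fst x3" "fst x1 \<noteq> fst x4"
         "fst x2 \<noteq> fst x3" "fst x2 \<noteq> fst x4" "fst x3 \<noteq> fst x4"
      using pts d fibre_fst_inj[OF \<open>c \<noteq> 0\<close>] by metis+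
    then show ?thesis using sum_reciprocal_vandermonde4 by simp
  qed
  finally show ?thesis .
qed

end
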